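(* Let $L:\mathbb{R}^n\times\mathbb{R}^n\to\mathbb{R}$ be smooth and $\tau>0$. Consider the midpoint scheme (Lagrangian form) $$\frac{p_{k+1}-p_k}{\tau}=D_1L\Big(\frac{q_{k+1}+q_k}{2},\frac{q_{k+1}-q_k}{\tau}\Big),\qquad \frac{p_{k+1}+p_k}{2}=D_2L\Big(\frac{q_{k+1}+q_k}{2},\frac{q_{k+1}-q_k}{\tau}\Big).$$ Let $W\subset\mathbb{R}^{2n}$ be open and $F:W\to\mathbb{R}^{2n}$ smooth such that for every $(q_k,p_k)\in W$, $(q_{k+1},p_{k+1})=F(q_k,p_k)$ satisfies these equations. Then $F$ is symplectic: $F^*\big(\sum_i dp_i\wedge dq^i\big)=\sum_i dp_i\wedge dq^i$.
   Context: $D_1L$, $D_2L$ denote the partial derivatives of $L(q,v)$ with respect to $q$ and $v$. *)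

theory Defs
  imports "HOL-Analysis.Analysis"
begin

fun k_smooth_on :: "nat \<Rightarrow> 'a::real_normed_vector set \<Rightarrow> ('a \<Rightarrow> 'b::real_normed_vector) \<Rightarrow> bool" where
  "k_smooth_on 0 S f = continuous_on S f"
| "k_smooth_on (Suc k) S f =
     (f differentiable_on S \<and> (\<forall>v. k_smooth_on k S (\<lambda>x. frechet_derivative f (at x) v)))"

definition smooth_on :: "'a::real_normed_vector set \<Rightarrow> ('a \<Rightarrow> 'b::real_normed_vector) \<Rightarrow> bool" where
  "smooth_on S f \<longleftrightarrow> (\<forall>k. k_smooth_on k S f)"

definition D1 :: "((real^'n) \<times> (real^'n) \<Rightarrow> real) \<Rightarrow> real^'n \<Rightarrow> real^'n \<Rightarrow> real^'n" where
  "D1 L q v = (\<chi> i. frechet_derivative (\<lambda>x. L (x, v)) (at q) (axis i 1))"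

definition D2 :: "((real^'n) \<times> (real^'n) \<Rightarrow> real) \<Rightarrow> real^'n \<Rightarrow> real^'n \<Rightarrow> real^'n" where
  "D2 L q v = (\<chi> i. frechet_derivative (\<lambda>x. L (q, x)) (at v) (axis i 1))"

text \<open>The canonical 2-form sum_i dp_i wedge dq^i on R^n x R^n (points written (q,p)).\<close>
definition omega :: "(real^'n) \<times> (real^'n) \<Rightarrow> (real^'n) \<times> (real^'n) \<Rightarrow> real" where
  "omega u w = (\<Sum>i\<in>UNIV. snd u $ i * fst w $ i - snd w $ i * fst u $ i)"

definition symplectic_on :: "((real^'n) \<times> (real^'n)) set \<Rightarrow> ((real^'n) \<times> (real^'n) \<Rightarrow> (real^'n) \<times> (real^'n)) \<Rightarrow> bool" where
  "symplectic_on W F \<longleftrightarrow> (\<forall>x\<in>W. \<forall>u w.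
      omega (frechet_derivative F (at x) u) (frechet_derivative F (at x) w) = omega u w)"

end

theory Submission
  imports Defs
begin

text \<open>Write \<open>v = ((q' + q)/2, (q' - q)/\<tau>)\<close> and \<open>m = ((p' - p)/\<tau>, (p' + p)/2)\<close>, where
  \<open>(q', p') = F (q, p)\<close>. The scheme says exactly that \<open>m\<close> is the gradient of \<open>L\<close> at \<open>v\<close>.
  For tangent vectors \<open>u, w\<close> an elementary computation gives
  \<open>\<omega>(F'u, F'w) - \<omega>(u, w) = \<tau> (\<langle>m'u, v'w\<rangle> - \<langle>m'w, v'u\<rangle>)\<close>, while differentiating the scheme
  gives \<open>\<langle>m'u, h\<rangle> = D\<^sup>2L(v)(v'u, h)\<close>. Hence the defect of symplecticity is \<open>\<tau>\<close> times the
  antisymmetric part of the Hessian of \<open>L\<close>, which vanishes by the symmetry of second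
  derivatives; the latter follows from the mean value theorem applied twice to a second difference.\<close>

lemma smooth_on_frechet_derivative:
  "smooth_on S f \<Longrightarrow> smooth_on S (\<lambda>x. frechet_derivative f (at x) v)"
  unfolding smooth_on_def by (metis k_smooth_on.simps(2))

lemma smooth_on_continuous_on: "smooth_on S f \<Longrightarrow> continuous_on S f"
  unfolding smooth_on_def by (metis k_smooth_on.simps(1))

lemma smooth_on_differentiable_at:
  assumes "smooth_on S f" "open S" "x \<in> S"
  shows "f differentiable at x"
proof -
  have "f differentiable_on S"
    using assms(1) unfolding smooth_on_def by (metis k_smooth_on.simps(2))
  then show ?thesis
    using assms(2,3) differentiable_on_eq_differentiable_at by blast
qed

lemma has_real_derivative_along_line:
  fixes f :: "'a::real_normed_vector \<Rightarrow> real"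
  assumes "f differentiable at (a + t *\<^sub>R v)"
  shows "((\<lambda>s. f (a + s *\<^sub>R v)) has_real_derivative frechet_derivative f (at (a + t *\<^sub>R v)) v) (at t)"
proof -
  let ?D = "frechet_derivative f (at (a + t *\<^sub>R v))"
  have line: "((\<lambda>s. a + s *\<^sub>R v) has_derivative (\<lambda>s. s *\<^sub>R v)) (at t)"
    by (auto intro!: derivative_eq_intros)
  have "(f has_derivative ?D) (at (a + t *\<^sub>R v))"
    using assms frechet_derivative_works by blast
  from has_derivative_compose[OF line this]
  have "((\<lambda>s. f (a + s *\<^sub>R v)) has_derivative (\<lambda>s. ?D (s *\<^sub>R v))) (at t)"
    by (simp add: o_def)
  moreover have "(\<lambda>s. ?D (s *\<^sub>R v)) = (\<lambda>s. ?D v * s)"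
    using linear_frechet_derivative[OF assms] by (auto simp: linear_scale)
  ultimately show ?thesis by (simp add: has_field_derivative_def)
qed

lemma second_difference_mean_value:
  fixes f :: "'a::real_normed_vector \<Rightarrow> real"
  assumes f_diff: "\<And>y. f differentiable at y"
    and Dg_diff: "\<And>y. (\<lambda>y. frechet_derivative f (at y) g) differentiable at y"
    and "s > 0"
  shows "\<exists>t u. 0 < t \<and> t < s \<and> 0 < u \<and> u < s \<and>
     f (z + s *\<^sub>R g + s *\<^sub>R h) - f (z + s *\<^sub>R g) - f (z + s *\<^sub>R h) + f z
       = s * s * frechet_derivative (\<lambda>y. frechet_derivative f (at y) g) (at (z + t *\<^sub>R g + u *\<^sub>R h)) h"
proof -
  define Dg where "Dg = (\<lambda>y. frechet_derivative f (at y) g)"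
  define k where "k = (\<lambda>t. f ((z + s *\<^sub>R h) + t *\<^sub>R g) - f (z + t *\<^sub>R g))"
  have k_deriv: "(k has_real_derivative (Dg ((z + s *\<^sub>R h) + t *\<^sub>R g) - Dg (z + t *\<^sub>R g))) (at t)" for t
    unfolding k_def Dg_def by (intro derivative_intros has_real_derivative_along_line f_diff)
  obtain t where t: "0 < t" "t < s"
    and kt: "k s - k 0 = s * (Dg ((z + s *\<^sub>R h) + t *\<^sub>R g) - Dg (z + t *\<^sub>R g))"
    using MVT2[OF \<open>s > 0\<close> k_deriv] by auto
  define m where "m = (\<lambda>u. Dg ((z + t *\<^sub>R g) + u *\<^sub>R h))"
  have m_deriv: "(m has_real_derivative frechet_derivative Dg (at ((z + t *\<^sub>R g) + u *\<^sub>R h)) h) (at u)" for u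
    unfolding m_def by (intro has_real_derivative_along_line) (simp add: Dg_def Dg_diff)
  obtain u where u: "0 < u" "u < s"
    and mu: "m s - m 0 = s * frechet_derivative Dg (at ((z + t *\<^sub>R g) + u *\<^sub>R h)) h"
    using MVT2[OF \<open>s > 0\<close> m_deriv] by auto
  have "f (z + s *\<^sub>R g + s *\<^sub>R h) - f (z + s *\<^sub>R g) - f (z + s *\<^sub>R h) + f z = k s - k 0"
    unfolding k_def by (simp add: algebra_simps)
  also have "\<dots> = s * (m s - m 0)"
    using kt unfolding m_def by (simp add: algebra_simps)
  also have "\<dots> = s * s * frechet_derivative Dg (at (z + t *\<^sub>R g + u *\<^sub>R h)) h"
    using mu by simp
  finally show ?thesis
    using t u unfolding Dg_def by blast
qed

lemma second_difference_quotient_tendsto: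
  fixes f :: "'a::real_normed_vector \<Rightarrow> real"
  assumes f_diff: "\<And>y. f differentiable at y"
    and Dg_diff: "\<And>y. (\<lambda>y. frechet_derivative f (at y) g) differentiable at y"
    and cont: "isCont (\<lambda>y. frechet_derivative (\<lambda>y. frechet_derivative f (at y) g) (at y) h) z"
  shows "((\<lambda>s. (f (z + s *\<^sub>R g + s *\<^sub>R h) - f (z + s *\<^sub>R g) - f (z + s *\<^sub>R h) + f z) / (s * s))
           \<longlongrightarrow> frechet_derivative (\<lambda>y. frechet_derivative f (at y) g) (at z) h) (at_right 0)"
    (is "(?Q \<longlongrightarrow> _) _")
proof (rule tendstoI)
  fix e :: real assume "e > 0"
  define A where "A = (\<lambda>y. frechet_derivative (\<lambda>y. frechet_derivative f (at y) g) (at y) h)"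
  obtain d where "d > 0" and d: "\<And>y. dist y z < d \<Longrightarrow> dist (A y) (A z) < e"
    using cont \<open>e > 0\<close> unfolding A_def continuous_at_eps_delta by blast
  define c where "c = norm g + norm h + 1"
  have "c > 0" unfolding c_def by (simp add: add_nonneg_pos)
  have "dist (?Q s) (A z) < e" if "0 < s" "s < d / c" for s
  proof -
    obtain t u where tu: "0 < t" "t < s" "0 < u" "u < s"
      and eq: "f (z + s *\<^sub>R g + s *\<^sub>R h) - f (z + s *\<^sub>R g) - f (z + s *\<^sub>R h) + f z
                 = s * s * A (z + t *\<^sub>R g + u *\<^sub>R h)"
      using second_difference_mean_value[OF f_diff Dg_diff \<open>0 < s\<close>] unfolding A_def by blast
    have "dist (z + t *\<^sub>R g + u *\<^sub>R h) z \<le> t * norm g + u * norm h"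
      using tu by (simp add: dist_norm norm_triangle_le)
    also have "\<dots> \<le> s * norm g + s * norm h"
      using tu by (intro add_mono mult_right_mono) auto
    also have "\<dots> \<le> s * c"
      using \<open>0 < s\<close> unfolding c_def by (simp add: algebra_simps)
    also have "\<dots> < d"
      using that \<open>c > 0\<close> by (simp add: pos_less_divide_eq)
    finally show ?thesis
      using d eq \<open>0 < s\<close> by simp
  qed
  then show "\<forall>\<^sub>F s in at_right 0. dist (?Q s) (A z) < e"
    unfolding eventually_at_right_field
    using \<open>d > 0\<close> \<open>c > 0\<close> by (metis divide_pos_pos)
qed

lemma second_frechet_derivative_symmetric:
  fixes f :: "'a::real_normed_vector \<Rightarrow> real"
  assumes "\<And>y. f differentiable at y"
    and "\<And>y. (\<lambda>y. frechet_derivative f (at y) g) differentiable at y"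
    and "\<And>y. (\<lambda>y. frechet_derivative f (at y) h) differentiable at y"
    and "isCont (\<lambda>y. frechet_derivative (\<lambda>y. frechet_derivative f (at y) g) (at y) h) z"
    and "isCont (\<lambda>y. frechet_derivative (\<lambda>y. frechet_derivative f (at y) h) (at y) g) z"
  shows "frechet_derivative (\<lambda>y. frechet_derivative f (at y) g) (at z) h
       = frechet_derivative (\<lambda>y. frechet_derivative f (at y) h) (at z) g"
proof (rule tendsto_unique[OF trivial_limit_at_right_real])
  let ?Q = "\<lambda>g h s. (f (z + s *\<^sub>R g + s *\<^sub>R h) - f (z + s *\<^sub>R g) - f (z + s *\<^sub>R h) + f z) / (s * s)"
  show "(?Q g h \<longlongrightarrow> frechet_derivative (\<lambda>y. frechet_derivative f (at y) g) (at z) h) (at_right 0)"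
    using second_difference_quotient_tendsto assms by blast
  have "(?Q h g \<longlongrightarrow> frechet_derivative (\<lambda>y. frechet_derivative f (at y) h) (at z) g) (at_right 0)"
    using second_difference_quotient_tendsto assms by blast
  moreover have "?Q h g = ?Q g h"
    by (simp add: fun_eq_iff algebra_simps)
  ultimately show "(?Q g h \<longlongrightarrow> frechet_derivative (\<lambda>y. frechet_derivative f (at y) h) (at z) g) (at_right 0)"
    by simp
qed

lemma smooth_on_UNIV_second_derivative_symmetric:
  fixes f :: "'a::real_normed_vector \<Rightarrow> real"
  assumes "smooth_on UNIV f"
  shows "frechet_derivative (\<lambda>y. frechet_derivative f (at y) g) (at z) h
       = frechet_derivative (\<lambda>y. frechet_derivative f (at y) h) (at z) g"
proof -
  have Df: "smooth_on UNIV (\<lambda>y. frechet_derivative f (at y) v)" for v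
    using assms by (rule smooth_on_frechet_derivative)
  have f_diff: "f differentiable at y" for y
    using assms smooth_on_differentiable_at by blast
  have Df_diff: "(\<lambda>y. frechet_derivative f (at y) v) differentiable at y" for v y
    using Df smooth_on_differentiable_at by blast
  have D2f_cont: "isCont (\<lambda>y. frechet_derivative (\<lambda>y. frechet_derivative f (at y) v) (at y) w) z" for v w
    using smooth_on_continuous_on[OF smooth_on_frechet_derivative[OF Df]]
    by (simp add: continuous_on_eq_continuous_at)
  show ?thesis
    by (rule second_frechet_derivative_symmetric[OF f_diff Df_diff Df_diff D2f_cont D2f_cont])
qed

lemma has_derivative_unique_comp_on_open:
  assumes "open W" "x \<in> W"
    and "(a has_derivative a') (at x)" "(k has_derivative k') (at x)" "(f has_derivative f') (at (k x))"
    and "\<And>y. y \<in> W \<Longrightarrow> a y = f (k y)"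
  shows "a' d = f' (k' d)"
proof -
  have "((\<lambda>y. f (k y)) has_derivative (\<lambda>d. f' (k' d))) (at x)"
    using has_derivative_compose[OF assms(4,5)] .
  then have "(a has_derivative (\<lambda>d. f' (k' d))) (at x)"
    using has_derivative_transform_within_open[OF _ assms(1,2)] assms(6) by metis
  then show ?thesis
    using has_derivative_unique[OF assms(3)] by metis
qed

lemma inner_vec_linear_functional:
  fixes \<phi> :: "real^'n \<Rightarrow> real"
  assumes "linear \<phi>"
  shows "inner (\<chi> i. \<phi> (axis i 1)) h = \<phi> h"
proof -
  have "\<phi> h = \<phi> (\<Sum>i\<in>UNIV. h $ i *\<^sub>R axis i 1)"
    using basis_expansion[of h] by (simp add: scalar_mult_eq_scaleR)
  also have "\<dots> = (\<Sum>i\<in>UNIV. h $ i * \<phi> (axis i 1))"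
    using assms by (simp add: linear_sum linear_scale o_def)
  finally show ?thesis
    by (simp add: inner_vec_def mult.commute)
qed

lemma has_derivative_partial_fst:
  assumes "(L has_derivative L') (at (q, v))"
  shows "((\<lambda>x. L (x, v)) has_derivative (\<lambda>d. L' (d, 0))) (at q)"
proof -
  have "((\<lambda>x. (x, v)) has_derivative (\<lambda>d. (d, 0))) (at q)"
    by (auto intro!: derivative_eq_intros)
  from has_derivative_compose[OF this assms] show ?thesis .
qed

lemma has_derivative_partial_snd:
  assumes "(L has_derivative L') (at (q, v))"
  shows "((\<lambda>x. L (q, x)) has_derivative (\<lambda>d. L' (0, d))) (at v)"
proof -
  have "((\<lambda>x. (q, x)) has_derivative (\<lambda>d. (0, d))) (at v)"
    by (auto intro!: derivative_eq_intros)
  from has_derivative_compose[OF this assms] show ?thesis .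
qed

lemma inner_partials_eq_frechet_derivative:
  assumes "L differentiable at (q, v)"
  shows "inner (D1 L q v, D2 L q v) h = frechet_derivative L (at (q, v)) h"
proof -
  define L' where "L' = frechet_derivative L (at (q, v))"
  have L': "(L has_derivative L') (at (q, v))"
    using assms frechet_derivative_works unfolding L'_def by blast
  note partial1 = has_derivative_partial_fst[OF L'] and partial2 = has_derivative_partial_snd[OF L']
  have "D1 L q v = (\<chi> i. L' (axis i 1, 0))" and "D2 L q v = (\<chi> i. L' (0, axis i 1))"
    unfolding D1_def D2_def frechet_derivative_at[OF partial1, symmetric]
      frechet_derivative_at[OF partial2, symmetric] by simp_all
  then have "inner (D1 L q v, D2 L q v) h = L' (fst h, 0) + L' (0, snd h)"
    using inner_vec_linear_functional[OF has_derivative_linear[OF partial1]]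
      inner_vec_linear_functional[OF has_derivative_linear[OF partial2]]
    by (simp add: inner_prod_def)
  also have "\<dots> = L' h"
    using linear_add[OF has_derivative_linear[OF L'], of "(fst h, 0)" "(0, snd h)"] by simp
  finally show ?thesis
    unfolding L'_def .
qed

lemma omega_eq_inner: "omega u w = inner (snd u) (fst w) - inner (snd w) (fst u)"
  unfolding omega_def inner_vec_def by (simp add: sum_subtractf)

definition midpoint_velocity :: "real \<Rightarrow> 'a::real_vector \<times> 'a \<Rightarrow> 'a \<times> 'a \<Rightarrow> 'a \<times> 'a" where
  "midpoint_velocity \<tau> y y' = ((1/2) *\<^sub>R (fst y' + fst y), (1/\<tau>) *\<^sub>R (fst y' - fst y))"

definition midpoint_momentum :: "real \<Rightarrow> 'a::real_vector \<times> 'a \<Rightarrow> 'a \<times> 'a \<Rightarrow> 'a \<times> 'a" where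
  "midpoint_momentum \<tau> y y' = ((1/\<tau>) *\<^sub>R (snd y' - snd y), (1/2) *\<^sub>R (snd y' + snd y))"

lemma has_derivative_midpoint_velocity:
  assumes "(F has_derivative F') (at x within s)"
  shows "((\<lambda>y. midpoint_velocity \<tau> y (F y)) has_derivative (\<lambda>d. midpoint_velocity \<tau> d (F' d))) (at x within s)"
  unfolding midpoint_velocity_def by (intro derivative_intros assms)

lemma has_derivative_midpoint_momentum:
  assumes "(F has_derivative F') (at x within s)"
  shows "((\<lambda>y. midpoint_momentum \<tau> y (F y)) has_derivative (\<lambda>d. midpoint_momentum \<tau> d (F' d))) (at x within s)"
  unfolding midpoint_momentum_def by (intro derivative_intros assms)

lemma omega_midpoint_identity:
  fixes y y' z z' :: "(real^'n) \<times> (real^'n)"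
  assumes "\<tau> \<noteq> 0"
  shows "omega y' z' - omega y z = \<tau> * (inner (midpoint_momentum \<tau> y y') (midpoint_velocity \<tau> z z')
                                       - inner (midpoint_momentum \<tau> z z') (midpoint_velocity \<tau> y y'))"
  using assms
  by (simp add: omega_eq_inner midpoint_momentum_def midpoint_velocity_def
      inner_add_left inner_add_right inner_diff_left inner_diff_right inner_commute field_simps)

lemma midpoint_scheme_preserves_omega:
  fixes L :: "(real^'n) \<times> (real^'n) \<Rightarrow> real"
  assumes L_smooth: "smooth_on UNIV L" and "\<tau> \<noteq> 0" and "open W" "x \<in> W"
    and F_deriv: "(F has_derivative F') (at x)"
    and gradient: "\<And>y h. y \<in> W \<Longrightarrow>
      inner (midpoint_momentum \<tau> y (F y)) h = frechet_derivative L (at (midpoint_velocity \<tau> y (F y))) h"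
  shows "omega (F' u) (F' w) = omega u w"
proof -
  let ?v = "\<lambda>d. midpoint_velocity \<tau> d (F' d)" and ?m = "\<lambda>d. midpoint_momentum \<tau> d (F' d)"
  let ?H = "\<lambda>a b. frechet_derivative (\<lambda>z. frechet_derivative L (at z) b) (at (midpoint_velocity \<tau> x (F x))) a"
  have m_deriv: "((\<lambda>y. inner (midpoint_momentum \<tau> y (F y)) h) has_derivative (\<lambda>d. inner (?m d) h)) (at x)" for h
    by (intro derivative_intros has_derivative_midpoint_momentum F_deriv)
  have v_deriv: "((\<lambda>y. midpoint_velocity \<tau> y (F y)) has_derivative ?v) (at x)"
    by (rule has_derivative_midpoint_velocity[OF F_deriv])
  have "(\<lambda>z. frechet_derivative L (at z) h) differentiable at (midpoint_velocity \<tau> x (F x))" for h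
    using smooth_on_differentiable_at[OF smooth_on_frechet_derivative[OF L_smooth]] by blast
  then have DL_deriv: "((\<lambda>z. frechet_derivative L (at z) h) has_derivative (\<lambda>a. ?H a h))
      (at (midpoint_velocity \<tau> x (F x)))" for h
    using frechet_derivative_works by blast
  have hessian: "inner (?m d) h = ?H (?v d) h" for d h
    using has_derivative_unique_comp_on_open[OF \<open>open W\<close> \<open>x \<in> W\<close> m_deriv v_deriv DL_deriv gradient] .
  have "omega (F' u) (F' w) - omega u w = \<tau> * (inner (?m u) (?v w) - inner (?m w) (?v u))"
    using \<open>\<tau> \<noteq> 0\<close> by (rule omega_midpoint_identity)
  also have "\<dots> = \<tau> * (?H (?v u) (?v w) - ?H (?v w) (?v u))"
    by (simp only: hessian)
  also have "\<dots> = 0"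
    using smooth_on_UNIV_second_derivative_symmetric[OF L_smooth] by simp
  finally show ?thesis
    by simp
qed

theorem mainTheorem3:
  fixes L :: "(real^'n) \<times> (real^'n) \<Rightarrow> real"
    and \<tau> :: real
    and W :: "((real^'n) \<times> (real^'n)) set"
    and F :: "(real^'n) \<times> (real^'n) \<Rightarrow> (real^'n) \<times> (real^'n)"
  assumes L_smooth: "smooth_on UNIV L"
    and tau_pos: "\<tau> > 0"
    and W_open: "open W"
    and F_smooth: "smooth_on W F"
    and scheme: "\<And>q p q' p'. (q, p) \<in> W \<Longrightarrow> F (q, p) = (q', p') \<Longrightarrow>
        (1 / \<tau>) *\<^sub>R (p' - p) = D1 L ((1/2) *\<^sub>R (q' + q)) ((1 / \<tau>) *\<^sub>R (q' - q)) \<and>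
        (1/2) *\<^sub>R (p' + p) = D2 L ((1/2) *\<^sub>R (q' + q)) ((1 / \<tau>) *\<^sub>R (q' - q))"
  shows "symplectic_on W F"
proof -
  have L_diff: "L differentiable at z" for z
    using smooth_on_differentiable_at[OF L_smooth open_UNIV UNIV_I] .
  have gradient: "inner (midpoint_momentum \<tau> y (F y)) h
      = frechet_derivative L (at (midpoint_velocity \<tau> y (F y))) h" if "y \<in> W" for y h
  proof -
    obtain q p q' p' where y: "y = (q, p)" and Fy: "F y = (q', p')"
      by (metis prod.exhaust)
    let ?v = "midpoint_velocity \<tau> y (F y)"
    have "midpoint_momentum \<tau> y (F y) = (D1 L (fst ?v) (snd ?v), D2 L (fst ?v) (snd ?v))"
      using scheme[of q p q' p'] that Fy by (simp add: y midpoint_momentum_def midpoint_velocity_def)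
    then show ?thesis
      using inner_partials_eq_frechet_derivative[OF L_diff] by simp
  qed
  show ?thesis
    unfolding symplectic_on_def
  proof (intro ballI allI)
    fix x u w assume "x \<in> W"
    then have "(F has_derivative frechet_derivative F (at x)) (at x)"
      using smooth_on_differentiable_at[OF F_smooth W_open] frechet_derivative_works by blast
    then show "omega (frechet_derivative F (at x) u) (frechet_derivative F (at x) w) = omega u w"
      using midpoint_scheme_preserves_omega[OF L_smooth _ W_open \<open>x \<in> W\<close> _ gradient] tau_pos by simp
  qed
qed

end
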